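(* Let $f_1,\dots,f_P:\mathbb{R}^n\to\mathbb{R}$ be continuously differentiable with Lipschitz continuous gradients, and let $f=\sum_{i=1}^P f_i$. Let $\{\zeta^k\}\subset\mathbb{R}_+$ be a sequence of positive step sizes with $\lim_{k\to\infty}\zeta^k=0$, and let $\{w^k\}\subset\mathbb{R}^n$ be a bounded sequence. For every $k$, let $(\widetilde w^k,d^k,\tilde f^k)=\texttt{Inner\_Cycle}(w^k,\zeta^k)$, with intermediate points $\widetilde w^k_0,\dots,\widetilde w^k_P$. Then for any limit point $\bar w$ of $\{w^k\}$ there exists an infinite index set $K$ such that \[ \lim_{k\to\infty,k\in K} w^k=\bar w,\qquad \lim_{k\to\infty,k\in K}\zeta^k=0,\qquad \lim_{k\to\infty,k\in K}\widetilde w^k_i=\bar w\ \text{ for all } i=1,\dots,P, \] \[ \lim_{k\to\infty,k\in K} d^k=-\nabla f(\bar w),\qquad \lim_{k\to\infty,k\in K}\tilde f^k=f(\bar w). \]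
   Context: The procedure $\texttt{Inner\_Cycle}(w,\zeta)$ (one epoch of the incremental gradient method) is defined as follows: set $\widetilde w_0=w$; for $i=1,\dots,P$ set $\tilde f_i=f_i(\widetilde w_{i-1})$, $\tilde d_i=-\nabla f_i(\widetilde w_{i-1})$, $\widetilde w_i=\widetilde w_{i-1}+\zeta\tilde d_i$. It outputs $\widetilde w=\widetilde w_P$, the direction $d=\sum_{i=1}^P\tilde d_i$, and the function estimate $\tilde f=\sum_{i=1}^P\tilde f_i=\sum_{i=1}^P f_i(\widetilde w_{i-1})$. When applied to $(w^k,\zeta^k)$ the intermediate points are denoted $\widetilde w^k_i$ and the outputs $\widetilde w^k,d^k,\tilde f^k$. *)

theory Defs
  imports "HOL-Analysis.Analysis"
begin

definition grad :: "('a::real_inner \<Rightarrow> real) \<Rightarrow> 'a \<Rightarrow> 'a" where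
  "grad g x = (SOME v. (g has_derivative (\<lambda>h. inner v h)) (at x))"

text \<open>Intermediate points of Inner_Cycle(w, zeta) for components f 1, ..., f P:
  pt 0 = w, pt i = pt (i-1) - zeta * grad (f i) (pt (i-1)).\<close>
fun ic_point :: "(nat \<Rightarrow> 'a::real_inner \<Rightarrow> real) \<Rightarrow> 'a \<Rightarrow> real \<Rightarrow> nat \<Rightarrow> 'a" where
  "ic_point f w \<zeta> 0 = w"
| "ic_point f w \<zeta> (Suc i) = ic_point f w \<zeta> i + \<zeta> *\<^sub>R (- grad (f (Suc i)) (ic_point f w \<zeta> i))"

definition ic_dir :: "(nat \<Rightarrow> 'a::real_inner \<Rightarrow> real) \<Rightarrow> nat \<Rightarrow> 'a \<Rightarrow> real \<Rightarrow> 'a" where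
  "ic_dir f P w \<zeta> = (\<Sum>i=1..P. - grad (f i) (ic_point f w \<zeta> (i - 1)))"

definition ic_fval :: "(nat \<Rightarrow> 'a::real_inner \<Rightarrow> real) \<Rightarrow> nat \<Rightarrow> 'a \<Rightarrow> real \<Rightarrow> real" where
  "ic_fval f P w \<zeta> = (\<Sum>i=1..P. f i (ic_point f w \<zeta> (i - 1)))"

definition limit_point_seq :: "(nat \<Rightarrow> 'a::topological_space) \<Rightarrow> 'a \<Rightarrow> bool" where
  "limit_point_seq x a \<longleftrightarrow> (\<exists>r. strict_mono r \<and> (x \<circ> r) \<longlonglongrightarrow> a)"

end

theory Submission
  imports Defs
begin

text \<open>Take a subsequence along which w k tends to wbar and let K be its index set. By induction
  on i, every intermediate point tends to wbar along K: if the (i-1)-th point does, then by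
  continuity grad (f i) at it tends to grad (f i) wbar, so the i-th step, zeta k times that
  gradient, vanishes with zeta k. Continuity of grad (f i) and f i at wbar then gives the limits
  of the direction and of the function estimate.\<close>

lemma has_derivative_grad:
  fixes g :: "'a::euclidean_space \<Rightarrow> real"
  assumes "g differentiable (at x)"
  shows "(g has_derivative (\<lambda>h. grad g x \<bullet> h)) (at x)"
proof -
  obtain D where D: "(g has_derivative D) (at x)"
    using assms by (auto simp: differentiable_def)
  have "D = (\<lambda>h. adjoint D 1 \<bullet> h)"
    using adjoint_works[OF has_derivative_linear[OF D], of _ 1] by (auto simp: inner_commute)
  with D have "\<exists>v. (g has_derivative (\<lambda>h. v \<bullet> h)) (at x)" by metis
  then show ?thesis
    unfolding grad_def by (rule someI_ex)
qed

lemma grad_eqI: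
  fixes g :: "'a::euclidean_space \<Rightarrow> real"
  assumes "(g has_derivative (\<lambda>h. v \<bullet> h)) (at x)"
  shows "grad g x = v"
proof -
  have "g differentiable (at x)"
    using assms by (auto simp: differentiable_def)
  then have "(\<lambda>h. grad g x \<bullet> h) = (\<lambda>h. v \<bullet> h)"
    using has_derivative_unique has_derivative_grad assms by blast
  then show ?thesis
    by (metis vector_eq_rdot)
qed

lemma grad_sum:
  fixes f :: "'i \<Rightarrow> 'a::euclidean_space \<Rightarrow> real"
  assumes "\<And>i. i \<in> I \<Longrightarrow> f i differentiable (at x)"
  shows "grad (\<lambda>y. \<Sum>i\<in>I. f i y) x = (\<Sum>i\<in>I. grad (f i) x)"
proof (rule grad_eqI)
  have "((\<lambda>y. \<Sum>i\<in>I. f i y) has_derivative (\<lambda>h. \<Sum>i\<in>I. grad (f i) x \<bullet> h)) (at x)"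
    using assms by (intro has_derivative_sum has_derivative_grad)
  then show "((\<lambda>y. \<Sum>i\<in>I. f i y) has_derivative (\<lambda>h. (\<Sum>i\<in>I. grad (f i) x) \<bullet> h)) (at x)"
    by (simp add: inner_sum_left)
qed

lemma tendsto_inf_principal_range:
  assumes r: "strict_mono r" and lim: "(g \<circ> r) \<longlonglongrightarrow> L"
  shows "(g \<longlongrightarrow> L) (inf sequentially (principal (range r)))"
proof (rule topological_tendstoI)
  fix S assume "open S" "L \<in> S"
  then obtain N where N: "\<And>n. n \<ge> N \<Longrightarrow> g (r n) \<in> S"
    using lim unfolding tendsto_def eventually_sequentially by auto
  have "eventually (\<lambda>k. k \<ge> r N \<and> k \<in> range r) (inf sequentially (principal (range r)))"
    unfolding eventually_inf_principal by (rule eventually_mono[OF eventually_ge_at_top[of "r N"]]) simp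
  then show "eventually (\<lambda>k. g k \<in> S) (inf sequentially (principal (range r)))"
  proof (rule eventually_mono)
    fix k assume "r N \<le> k \<and> k \<in> range r"
    then obtain n where "k = r n" "N \<le> n"
      using r by (auto simp: strict_mono_less_eq)
    then show "g k \<in> S" using N by simp
  qed
qed

lemma ic_point_tendsto:
  assumes w: "(w \<longlongrightarrow> wbar) F" and \<zeta>: "(\<zeta> \<longlongrightarrow> 0) F"
    and grad_cont: "\<And>i. i \<in> {1..m} \<Longrightarrow> isCont (grad (f i)) wbar"
  shows "((\<lambda>k. ic_point f (w k) (\<zeta> k) m) \<longlongrightarrow> wbar) F"
  using grad_cont
proof (induction m)
  case 0
  then show ?case using w by simp
next
  case (Suc i)
  then have IH: "((\<lambda>k. ic_point f (w k) (\<zeta> k) i) \<longlongrightarrow> wbar) F" by simp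
  have "((\<lambda>k. grad (f (Suc i)) (ic_point f (w k) (\<zeta> k) i)) \<longlongrightarrow> grad (f (Suc i)) wbar) F"
    using Suc.prems by (intro isCont_tendsto_compose[OF _ IH]) simp
  then have "((\<lambda>k. \<zeta> k *\<^sub>R - grad (f (Suc i)) (ic_point f (w k) (\<zeta> k) i))
      \<longlongrightarrow> 0 *\<^sub>R - grad (f (Suc i)) wbar) F"
    by (intro tendsto_scaleR \<zeta> tendsto_minus)
  from tendsto_add[OF IH this] show ?case
    by simp
qed

lemma ic_dir_tendsto:
  assumes "(w \<longlongrightarrow> wbar) F" and "(\<zeta> \<longlongrightarrow> 0) F"
    and grad_cont: "\<And>i. i \<in> {1..P} \<Longrightarrow> isCont (grad (f i)) wbar"
  shows "((\<lambda>k. ic_dir f P (w k) (\<zeta> k)) \<longlongrightarrow> - (\<Sum>i=1..P. grad (f i) wbar)) F"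
  unfolding ic_dir_def sum_negf[symmetric]
  using assms by (intro tendsto_sum tendsto_minus isCont_tendsto_compose[OF grad_cont]
      ic_point_tendsto) auto

lemma ic_fval_tendsto:
  assumes "(w \<longlongrightarrow> wbar) F" and "(\<zeta> \<longlongrightarrow> 0) F"
    and "\<And>i. i \<in> {1..P} \<Longrightarrow> isCont (grad (f i)) wbar"
    and f_cont: "\<And>i. i \<in> {1..P} \<Longrightarrow> isCont (f i) wbar"
  shows "((\<lambda>k. ic_fval f P (w k) (\<zeta> k)) \<longlongrightarrow> (\<Sum>i=1..P. f i wbar)) F"
  unfolding ic_fval_def
  using assms by (intro tendsto_sum isCont_tendsto_compose[OF f_cont] ic_point_tendsto) auto

theorem proposition1:
  fixes f :: "nat \<Rightarrow> 'a::euclidean_space \<Rightarrow> real"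
    and P :: nat
    and \<zeta> :: "nat \<Rightarrow> real"
    and w :: "nat \<Rightarrow> 'a"
    and wbar :: 'a
  assumes diff: "\<And>i x. i \<in> {1..P} \<Longrightarrow> f i differentiable (at x)"
    and cont_grad: "\<And>i. i \<in> {1..P} \<Longrightarrow> continuous_on UNIV (grad (f i))"
    and lip_grad: "\<And>i. i \<in> {1..P} \<Longrightarrow> \<exists>L. L-lipschitz_on UNIV (grad (f i))"
    and step_pos: "\<And>k. \<zeta> k > 0"
    and step_lim: "\<zeta> \<longlonglongrightarrow> 0"
    and bdd: "bounded (range w)"
    and lp: "limit_point_seq w wbar"
  shows "\<exists>K::nat set. infinite K \<and>
           ((\<lambda>k. w k) \<longlongrightarrow> wbar) (inf sequentially (principal K)) \<and>
           ((\<lambda>k. \<zeta> k) \<longlongrightarrow> 0) (inf sequentially (principal K)) \<and>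
           (\<forall>i\<in>{1..P}. ((\<lambda>k. ic_point f (w k) (\<zeta> k) i) \<longlongrightarrow> wbar) (inf sequentially (principal K))) \<and>
           ((\<lambda>k. ic_dir f P (w k) (\<zeta> k)) \<longlongrightarrow> - grad (\<lambda>x. \<Sum>i=1..P. f i x) wbar) (inf sequentially (principal K)) \<and>
           ((\<lambda>k. ic_fval f P (w k) (\<zeta> k)) \<longlongrightarrow> (\<Sum>i=1..P. f i wbar)) (inf sequentially (principal K))"
proof -
  obtain r where r: "strict_mono r" and "(w \<circ> r) \<longlonglongrightarrow> wbar"
    using lp unfolding limit_point_seq_def by blast
  then have w_lim: "(w \<longlongrightarrow> wbar) (inf sequentially (principal (range r)))"
    by (rule tendsto_inf_principal_range)
  have \<zeta>_lim: "(\<zeta> \<longlongrightarrow> 0) (inf sequentially (principal (range r)))"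
    using step_lim by (rule tendsto_mono[rotated]) simp
  have grad_cont: "\<And>i. i \<in> {1..P} \<Longrightarrow> isCont (grad (f i)) wbar"
    using cont_grad by (simp add: continuous_on_eq_continuous_at)
  have f_cont: "\<And>i. i \<in> {1..P} \<Longrightarrow> isCont (f i) wbar"
    using diff by (simp add: differentiable_imp_continuous_within)
  have "grad (\<lambda>x. \<Sum>i=1..P. f i x) wbar = (\<Sum>i=1..P. grad (f i) wbar)"
    using diff by (rule grad_sum)
  moreover have "infinite (range r)"
    using r strict_mono_imp_inj_on finite_imageD by blast
  ultimately show ?thesis
    using w_lim \<zeta>_lim ic_point_tendsto[OF w_lim \<zeta>_lim grad_cont]
      ic_dir_tendsto[OF w_lim \<zeta>_lim grad_cont] ic_fval_tendsto[OF w_lim \<zeta>_lim grad_cont f_cont]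
    by (intro exI[of _ "range r"]) simp
qed

end
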